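(* Let $P\in\mathcal{P}$, suppose $\nu:\mathcal{P}\to\mathcal{H}$ is pathwise differentiable at $P$, and let $\beta=(\beta_k)_{k\ge1}\in\ell^2\cap[0,1]^{\mathbb{N}}$. Define $r_P^\beta(h)(z)=\sum_{k=1}^\infty\beta_k\langle h,h_k\rangle_{\mathcal{H}}\dot{\nu}_P^*(h_k)(z)$. Then there is a set $\mathcal{Z}^\beta$ of $P$-probability one such that for every $z\in\mathcal{Z}^\beta$, $r_P^\beta(\cdot)(z):\mathcal{H}\to\mathbb{R}$ is a bounded linear functional with Riesz representation $$\phi_P^\beta(z)=\sum_{k=1}^\infty\beta_k\dot{\nu}_P^*(h_k)(z)h_k.$$ Moreover, $\sigma_P(\beta):=\|\phi_P^\beta\|_{L^2(P;\mathcal{H})}=\big[\sum_{k=1}^\infty\beta_k^2P\{\dot{\nu}_P^*(h_k)^2\}\big]^{1/2}\le\|\dot{\nu}_P^*\|_{\mathrm{op}}\|\beta\|_{\ell^2}<\infty$.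
   Context: Let $(\mathcal{Z},\mathbf{B})$ be a Polish space and $\mathcal{P}$ a model of probability distributions on it dominated by a $\sigma$-finite measure $\lambda$. For $P\in\mathcal{P}$ and $s\in L^2(P)$, $\mathscr{P}(P,\mathcal{P},s)$ is the set of submodels $\{P_\epsilon:\epsilon\in[0,\delta)\}\subset\mathcal{P}$ with $\|p_\epsilon^{1/2}-p^{1/2}-\epsilon s p^{1/2}/2\|_{L^2(\lambda)}=o(\epsilon)$ ($p_\epsilon,p$ the $\lambda$-densities). The tangent set is $\{s:\mathscr{P}(P,\mathcal{P},s)\ne\emptyset\}$, the tangent space $\dot{\mathcal{P}}_P$ its closed linear span in $L^2(P)$. $\mathcal{H}$ is a real separable Hilbert space with orthonormal basis $(h_k)_{k\ge1}$ (if $\dim\mathcal{H}<\infty$, an orthonormal basis padded with zero vectors). $\nu$ is pathwise differentiable at $P$ if there is a continuous linear $\dot{\nu}_P:\dot{\mathcal{P}}_P\to\mathcal{H}$ with $\|\nu(P_\epsilon)-\nu(P)-\epsilon\dot{\nu}_P(s)\|_{\mathcal{H}}=o(\epsilon)$ for every $s$ in the tangent set and every submodel in $\mathscr{P}(P,\mathcal{P},s)$; $\dot{\nu}_P^*:\mathcal{H}\to\dot{\mathcal{P}}_P$ is its adjoint (efficient influence operator), with $\|\cdot\|_{\mathrm{op}}$ the operator norm. For a function $f$, $Pf=\int f\,dP$. $L^2(P;\mathcal{H})$ denotes Bochner measurable $f:\mathcal{Z}\to\mathcal{H}$ with $\int\|f\|_{\mathcal{H}}^2dP<\infty$, with that norm.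 *)

theory Defs
  imports "HOL-Probability.Probability"
begin

definition L2fun :: "'z measure \<Rightarrow> ('z \<Rightarrow> real) set" where
  "L2fun M = {s. s \<in> borel_measurable M \<and> integrable M (\<lambda>z. (s z)\<^sup>2)}"

definition L2norm :: "'z measure \<Rightarrow> ('z \<Rightarrow> real) \<Rightarrow> real" where
  "L2norm M s = sqrt (\<integral>z. (s z)\<^sup>2 \<partial>M)"

definition dominated_model :: "'z::polish_space measure \<Rightarrow> 'z measure set \<Rightarrow> bool" where
  "dominated_model lam PP \<longleftrightarrow> sigma_finite_measure lam \<and> sets lam = sets borel \<and>
     (\<forall>Q\<in>PP. prob_space Q \<and> sets Q = sets borel \<and> absolutely_continuous lam Q)"

text \<open>Hellinger-differentiable submodels through P with score s:
  a family Pe e, e in [0,delta), contained in the model, with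
  norm_{L2(lam)}(sqrt p_e - sqrt p - e s sqrt p / 2) = o(e) as e -> 0+,
  where densities are the Radon-Nikodym derivatives w.r.t. lam.\<close>
definition submodels ::
  "'z::polish_space measure \<Rightarrow> 'z measure \<Rightarrow> 'z measure set \<Rightarrow> ('z \<Rightarrow> real)
     \<Rightarrow> (real \<times> (real \<Rightarrow> 'z measure)) set" where
  "submodels lam P PP s = {(\<delta>, Pe). \<delta> > 0 \<and> (\<forall>e\<in>{0..<\<delta>}. Pe e \<in> PP) \<and>
     (\<forall>c>0. eventually (\<lambda>e.
        (\<integral>\<^sup>+ z. ennreal ((sqrt (enn2real (RN_deriv lam (Pe e) z))
                          - sqrt (enn2real (RN_deriv lam P z))
                          - e * s z * sqrt (enn2real (RN_deriv lam P z)) / 2)\<^sup>2) \<partial>lam)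
        \<le> ennreal ((c * e)\<^sup>2)) (at_right 0))}"

definition tangent_set :: "'z::polish_space measure \<Rightarrow> 'z measure \<Rightarrow> 'z measure set \<Rightarrow> ('z \<Rightarrow> real) set" where
  "tangent_set lam P PP = {s \<in> L2fun P. submodels lam P PP s \<noteq> {}}"

definition fun_span :: "('z \<Rightarrow> real) set \<Rightarrow> ('z \<Rightarrow> real) set" where
  "fun_span T = {t. \<exists>F c. finite F \<and> F \<subseteq> T \<and> t = (\<lambda>z. \<Sum>f\<in>F. c f * f z)}"

definition tangent_space :: "'z::polish_space measure \<Rightarrow> 'z measure \<Rightarrow> 'z measure set \<Rightarrow> ('z \<Rightarrow> real) set" where
  "tangent_space lam P PP = {s \<in> L2fun P. \<forall>\<epsilon>>0. \<exists>t\<in>fun_span (tangent_set lam P PP).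
       L2norm P (\<lambda>z. s z - t z) < \<epsilon>}"

text \<open>Orthonormal basis of H indexed by nat, padded with zeros if dim H is finite.\<close>
definition padded_onb :: "(nat \<Rightarrow> 'h::{real_inner,complete_space}) \<Rightarrow> bool" where
  "padded_onb hb \<longleftrightarrow>
     (\<forall>j k. j \<noteq> k \<longrightarrow> inner (hb j) (hb k) = 0) \<and>
     ((\<forall>k. norm (hb k) = 1) \<or> (\<exists>n. (\<forall>k<n. norm (hb k) = 1) \<and> (\<forall>k\<ge>n. hb k = 0))) \<and>
     closure (span (range hb)) = UNIV"

definition pathwise_diff ::
  "'z::polish_space measure \<Rightarrow> 'z measure set \<Rightarrow> ('z measure \<Rightarrow> 'h::{real_inner,complete_space})
     \<Rightarrow> 'z measure \<Rightarrow> (('z \<Rightarrow> real) \<Rightarrow> 'h) \<Rightarrow> bool" where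
  "pathwise_diff lam PP \<nu> P nud \<longleftrightarrow>
     (\<forall>s\<in>tangent_space lam P PP. \<forall>t\<in>tangent_space lam P PP. \<forall>a b.
        nud (\<lambda>z. a * s z + b * t z) = a *\<^sub>R nud s + b *\<^sub>R nud t) \<and>
     (\<exists>K. \<forall>s\<in>tangent_space lam P PP. norm (nud s) \<le> K * L2norm P s) \<and>
     (\<forall>s\<in>tangent_set lam P PP. \<forall>(\<delta>, Pe)\<in>submodels lam P PP s. \<forall>c>0.
        eventually (\<lambda>e. norm (\<nu> (Pe e) - \<nu> P - e *\<^sub>R nud s) \<le> c * e) (at_right 0))"

definition is_adjoint ::
  "'z::polish_space measure \<Rightarrow> 'z measure \<Rightarrow> 'z measure set \<Rightarrow> (('z \<Rightarrow> real) \<Rightarrow> 'h::{real_inner,complete_space})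
     \<Rightarrow> ('h \<Rightarrow> 'z \<Rightarrow> real) \<Rightarrow> bool" where
  "is_adjoint lam P PP nud nus \<longleftrightarrow>
     (\<forall>h. nus h \<in> tangent_space lam P PP) \<and>
     (\<forall>s\<in>tangent_space lam P PP. \<forall>h. inner (nud s) h = (\<integral>z. s z * nus h z \<partial>P))"

definition op_norm_L2 :: "'z measure \<Rightarrow> ('h::real_normed_vector \<Rightarrow> 'z \<Rightarrow> real) \<Rightarrow> real" where
  "op_norm_L2 P T = (SUP h\<in>{h. norm h \<le> 1}. L2norm P (T h))"

end

(* For fixed z, the functional h |-> sum_k beta_k <h, h_k> nus(h_k)(z) is represented by the
   orthogonal series phi(z) = sum_k beta_k nus(h_k)(z) h_k, which converges whenever its
   coefficients are square summable. By monotone convergence the expected sum of the squared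
   coefficients is sum_k beta_k^2 P(nus(h_k)^2), and this is finite: Cauchy-Schwarz and the
   boundedness of nud bound the L2(P) norm of nus h by a multiple of norm h. So the
   coefficients are square summable almost surely, and Parseval followed by termwise
   integration gives the L2(P; H) norm of phi. *)

theory Submission
  imports Defs
begin

lemma norm_sum_orthogonal_squared:
  fixes b :: "nat \<Rightarrow> 'h::real_inner" and c :: "nat \<Rightarrow> real"
  assumes orthogonal: "\<And>j k. j \<noteq> k \<Longrightarrow> inner (b j) (b k) = 0" and "finite A"
  shows "(norm (\<Sum>k\<in>A. c k *\<^sub>R b k))\<^sup>2 = (\<Sum>k\<in>A. (c k)\<^sup>2 * (norm (b k))\<^sup>2)"
proof -
  have "(norm (\<Sum>k\<in>A. c k *\<^sub>R b k))\<^sup>2 = (\<Sum>k\<in>A. (norm (c k *\<^sub>R b k))\<^sup>2)"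
    using assms by (intro norm_sum_Pythagorean) (auto simp: pairwise_def orthogonal_def)
  then show ?thesis
    by (simp add: power_mult_distrib)
qed

lemma summable_orthogonal_series:
  fixes b :: "nat \<Rightarrow> 'h::{real_inner,complete_space}" and c :: "nat \<Rightarrow> real"
  assumes orthogonal: "\<And>j k. j \<noteq> k \<Longrightarrow> inner (b j) (b k) = 0"
    and norm_le_1: "\<And>k. norm (b k) \<le> 1"
    and square_summable: "summable (\<lambda>k. (c k)\<^sup>2)"
  shows "summable (\<lambda>k. c k *\<^sub>R b k)"
proof -
  define S where "S = (\<lambda>n. \<Sum>k<n. c k *\<^sub>R b k)"
  define T where "T = (\<lambda>n. \<Sum>k<n. (c k)\<^sup>2)"
  have block: "(norm (S m - S n))\<^sup>2 \<le> T m - T n" if "n \<le> m" for m n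
  proof -
    have "(norm (S m - S n))\<^sup>2 = (\<Sum>k\<in>{n..<m}. (c k)\<^sup>2 * (norm (b k))\<^sup>2)"
      using that orthogonal sum_diff_nat_ivl[of 0 n m "\<lambda>k. c k *\<^sub>R b k"]
      by (simp add: S_def atLeast0LessThan norm_sum_orthogonal_squared)
    also have "\<dots> \<le> (\<Sum>k\<in>{n..<m}. (c k)\<^sup>2)"
      using norm_le_1 by (intro sum_mono mult_left_le) (auto simp: power_le_one)
    also have "\<dots> = T m - T n"
      using that sum_diff_nat_ivl[of 0 n m "\<lambda>k. (c k)\<^sup>2"] by (simp add: T_def atLeast0LessThan)
    finally show ?thesis .
  qed
  have increment_le: "(norm (S m - S n))\<^sup>2 \<le> norm (T m - T n)" for m n
    using block[of n m] block[of m n] by (cases "n \<le> m") (simp_all add: norm_minus_commute)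
  moreover have "Cauchy T"
    using square_summable by (simp add: T_def summable_iff_convergent convergent_Cauchy)
  ultimately have "Cauchy S"
  proof (intro CauchyI)
    fix e :: real
    assume "e > 0"
    then obtain M where "\<forall>m\<ge>M. \<forall>n\<ge>M. norm (T m - T n) < e\<^sup>2"
      using \<open>Cauchy T\<close> CauchyD by (meson zero_less_power)
    then have "\<forall>m\<ge>M. \<forall>n\<ge>M. (norm (S m - S n))\<^sup>2 < e\<^sup>2"
      using increment_le by (meson le_less_trans)
    then show "\<exists>M. \<forall>m\<ge>M. \<forall>n\<ge>M. norm (S m - S n) < e"
      using \<open>e > 0\<close> by (meson less_le power2_less_imp_less)
  qed
  then show ?thesis
    by (simp add: S_def summable_iff_convergent Cauchy_convergent)
qed

lemma orthogonal_series_norm_sums: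
  fixes b :: "nat \<Rightarrow> 'h::{real_inner,complete_space}" and c :: "nat \<Rightarrow> real"
  assumes orthogonal: "\<And>j k. j \<noteq> k \<Longrightarrow> inner (b j) (b k) = 0"
    and "summable (\<lambda>k. c k *\<^sub>R b k)"
  shows "(\<lambda>k. (c k)\<^sup>2 * (norm (b k))\<^sup>2) sums (norm (\<Sum>k. c k *\<^sub>R b k))\<^sup>2"
proof -
  have "(\<lambda>n. (norm (\<Sum>k<n. c k *\<^sub>R b k))\<^sup>2) \<longlonglongrightarrow> (norm (\<Sum>k. c k *\<^sub>R b k))\<^sup>2"
    using assms(2) by (intro tendsto_intros summable_LIMSEQ)
  then show ?thesis
    using orthogonal by (simp add: sums_def norm_sum_orthogonal_squared)
qed

lemma orthogonal_series_inner_sums: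
  fixes b :: "nat \<Rightarrow> 'h::{real_inner,complete_space}" and c :: "nat \<Rightarrow> real"
  assumes "summable (\<lambda>k. c k *\<^sub>R b k)"
  shows "(\<lambda>k. c k * inner h (b k)) sums inner h (\<Sum>k. c k *\<^sub>R b k)"
  using bounded_linear.sums[OF bounded_linear_inner_right summable_sums[OF assms], of h]
  by simp

definition square_summable_set :: "'z measure \<Rightarrow> (nat \<Rightarrow> 'z \<Rightarrow> real) \<Rightarrow> 'z set" where
  "square_summable_set M f = {z \<in> space M. summable (\<lambda>k. (f k z)\<^sup>2)}"

lemma square_summable_set_eq_ennreal:
  "square_summable_set M f = {z \<in> space M. (\<Sum>k. ennreal ((f k z)\<^sup>2)) \<noteq> \<infinity>}"
  by (auto simp: square_summable_set_def suminf_ennreal2 intro: summable_suminf_not_top)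

lemma sets_square_summable_set [measurable]:
  assumes [measurable]: "\<And>k. f k \<in> borel_measurable M"
  shows "square_summable_set M f \<in> sets M"
  unfolding square_summable_set_eq_ennreal by measurable

lemma AE_square_summable_set:
  assumes measurable_f [measurable]: "\<And>k. f k \<in> borel_measurable M"
    and integrable_square: "\<And>k. integrable M (\<lambda>z. (f k z)\<^sup>2)"
    and summable_integral: "summable (\<lambda>k. \<integral>z. (f k z)\<^sup>2 \<partial>M)"
  shows "AE z in M. z \<in> square_summable_set M f"
proof -
  have "(\<integral>\<^sup>+z. (\<Sum>k. ennreal ((f k z)\<^sup>2)) \<partial>M) = (\<Sum>k. \<integral>\<^sup>+z. ennreal ((f k z)\<^sup>2) \<partial>M)"
    by (intro nn_integral_suminf) measurable
  also have "\<dots> = (\<Sum>k. ennreal (\<integral>z. (f k z)\<^sup>2 \<partial>M))"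
    using integrable_square by (simp add: nn_integral_eq_integral)
  also have "\<dots> = ennreal (\<Sum>k. \<integral>z. (f k z)\<^sup>2 \<partial>M)"
    using summable_integral by (intro suminf_ennreal2) auto
  finally have "AE z in M. (\<Sum>k. ennreal ((f k z)\<^sup>2)) \<noteq> \<infinity>"
    by (intro nn_integral_PInf_AE) auto
  then show ?thesis
    by (auto simp: square_summable_set_eq_ennreal)
qed

(* The type 'h need not be second countable, so sums of measurable 'h-valued maps are not
   known to be measurable; finite combinations factor through a continuous map on nat => real. *)
lemma borel_measurable_finite_combination:
  fixes c :: "nat \<Rightarrow> 'z \<Rightarrow> real" and b :: "nat \<Rightarrow> 'h::real_normed_vector"
  assumes "\<And>k. c k \<in> borel_measurable M"
  shows "(\<lambda>z. \<Sum>k<n. c k z *\<^sub>R b k) \<in> borel_measurable M"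
proof -
  have "(\<lambda>z k. c k z) \<in> borel_measurable M"
    using assms by (intro measurable_coordinatewise_then_product) auto
  moreover have "(\<lambda>x. \<Sum>k<n. x k *\<^sub>R b k) \<in> borel_measurable borel"
    by (intro borel_measurable_continuous_onI continuous_intros continuous_on_product_coordinates)
  ultimately show ?thesis
    using measurable_comp by (fastforce simp: comp_def)
qed

lemma borel_measurable_orthogonal_series:
  fixes b :: "nat \<Rightarrow> 'h::{real_inner,complete_space}"
  assumes orthogonal: "\<And>j k. j \<noteq> k \<Longrightarrow> inner (b j) (b k) = 0"
    and norm_le_1: "\<And>k. norm (b k) \<le> 1"
    and [measurable]: "\<And>k. f k \<in> borel_measurable M"
  shows "(\<lambda>z. indicator (square_summable_set M f) z *\<^sub>R (\<Sum>k. f k z *\<^sub>R b k)) \<in> borel_measurable M"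
proof (rule borel_measurable_LIMSEQ_metric)
  fix z
  show "(\<lambda>n. indicator (square_summable_set M f) z *\<^sub>R (\<Sum>k<n. f k z *\<^sub>R b k))
    \<longlonglongrightarrow> indicator (square_summable_set M f) z *\<^sub>R (\<Sum>k. f k z *\<^sub>R b k)"
    using summable_orthogonal_series[OF orthogonal norm_le_1, where c="\<lambda>k. f k z"]
    by (cases "z \<in> square_summable_set M f")
      (auto simp: square_summable_set_def intro: summable_LIMSEQ)
next
  fix n
  show "(\<lambda>z. indicator (square_summable_set M f) z *\<^sub>R (\<Sum>k<n. f k z *\<^sub>R b k)) \<in> borel_measurable M"
    unfolding scaleR_sum_right scaleR_scaleR
    by (intro borel_measurable_finite_combination) measurable
qed

lemma has_bochner_integral_norm_orthogonal_series:
  fixes b :: "nat \<Rightarrow> 'h::{real_inner,complete_space}"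
  assumes orthogonal: "\<And>j k. j \<noteq> k \<Longrightarrow> inner (b j) (b k) = 0"
    and norm_le_1: "\<And>k. norm (b k) \<le> 1"
    and measurable_f [measurable]: "\<And>k. f k \<in> borel_measurable M"
    and integrable_square: "\<And>k. integrable M (\<lambda>z. (f k z)\<^sup>2)"
    and summable_integral: "summable (\<lambda>k. \<integral>z. (f k z)\<^sup>2 \<partial>M)"
  shows "has_bochner_integral M
    (\<lambda>z. (norm (indicator (square_summable_set M f) z *\<^sub>R (\<Sum>k. f k z *\<^sub>R b k)))\<^sup>2)
    (\<Sum>k. (norm (b k))\<^sup>2 * (\<integral>z. (f k z)\<^sup>2 \<partial>M))"
proof -
  define Z where "Z = square_summable_set M f"
  define \<phi> where "\<phi> = (\<lambda>z. indicator Z z *\<^sub>R (\<Sum>k. f k z *\<^sub>R b k))"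
  define d where "d = (\<lambda>k z. (f k z)\<^sup>2 * (norm (b k))\<^sup>2)"
  have d_sums: "(\<lambda>k. d k z) sums (norm (\<phi> z))\<^sup>2" if "z \<in> Z" for z
    using that summable_orthogonal_series[OF orthogonal norm_le_1, where c="\<lambda>k. f k z"]
    by (auto simp: Z_def \<phi>_def square_summable_set_def d_def
        intro: orthogonal_series_norm_sums orthogonal)
  have AE_Z: "AE z in M. z \<in> Z"
    unfolding Z_def using measurable_f integrable_square summable_integral by (rule AE_square_summable_set)
  have integrable_d: "integrable M (d k)" for k
    using integrable_square by (simp add: d_def)
  have integral_d: "(\<integral>z. d k z \<partial>M) = (norm (b k))\<^sup>2 * (\<integral>z. (f k z)\<^sup>2 \<partial>M)" for k
    by (simp add: d_def mult.commute)
  have "summable (\<lambda>k. \<integral>z. norm (d k z) \<partial>M)"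
  proof (rule summable_comparison_test[OF _ summable_integral])
    show "\<exists>N. \<forall>k\<ge>N. norm (\<integral>z. norm (d k z) \<partial>M) \<le> (\<integral>z. (f k z)\<^sup>2 \<partial>M)"
      using norm_le_1 by (auto simp: integral_d[unfolded d_def] d_def abs_mult
          intro!: mult_left_le power_le_one integral_nonneg_AE)
  qed
  moreover have "AE z in M. summable (\<lambda>k. norm (d k z))"
    using AE_Z by (rule eventually_mono) (auto dest: d_sums simp: d_def sums_iff)
  ultimately have "has_bochner_integral M (\<lambda>z. \<Sum>k. d k z) (\<Sum>k. (norm (b k))\<^sup>2 * (\<integral>z. (f k z)\<^sup>2 \<partial>M))"
    using integrable_d by (simp add: has_bochner_integral_iff integrable_suminf integral_suminf integral_d)
  moreover have "AE z in M. (\<Sum>k. d k z) = (norm (\<phi> z))\<^sup>2"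
    using AE_Z by (rule eventually_mono) (metis d_sums sums_unique)
  moreover have "\<phi> \<in> borel_measurable M"
    unfolding \<phi>_def Z_def by (rule borel_measurable_orthogonal_series[OF orthogonal norm_le_1 measurable_f])
  ultimately have "has_bochner_integral M (\<lambda>z. (norm (\<phi> z))\<^sup>2) (\<Sum>k. (norm (b k))\<^sup>2 * (\<integral>z. (f k z)\<^sup>2 \<partial>M))"
    using integrable_d by (subst has_bochner_integral_cong_AE[symmetric]) auto
  then show ?thesis
    by (simp add: \<phi>_def Z_def)
qed

lemma weighted_orthogonal_series_represents_functional:
  fixes b :: "nat \<Rightarrow> 'h::{real_inner,complete_space}" and \<beta> g :: "nat \<Rightarrow> real"
  assumes orthogonal: "\<And>j k. j \<noteq> k \<Longrightarrow> inner (b j) (b k) = 0"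
    and norm_le_1: "\<And>k. norm (b k) \<le> 1"
    and square_summable: "summable (\<lambda>k. (\<beta> k * g k)\<^sup>2)"
  shows "(\<forall>h. summable (\<lambda>k. \<beta> k * inner h (b k) * g k)) \<and>
    bounded_linear (\<lambda>h. \<Sum>k. \<beta> k * inner h (b k) * g k) \<and>
    summable (\<lambda>k. (\<beta> k * g k) *\<^sub>R b k) \<and>
    (\<forall>h. (\<Sum>k. \<beta> k * inner h (b k) * g k) = inner h (\<Sum>k. (\<beta> k * g k) *\<^sub>R b k))"
proof -
  have summable: "summable (\<lambda>k. (\<beta> k * g k) *\<^sub>R b k)"
    using assms by (rule summable_orthogonal_series)
  have "(\<lambda>k. \<beta> k * inner h (b k) * g k) sums inner h (\<Sum>k. (\<beta> k * g k) *\<^sub>R b k)" for h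
    using orthogonal_series_inner_sums[OF summable, of h] by (simp add: mult_ac)
  then have "summable (\<lambda>k. \<beta> k * inner h (b k) * g k)"
    and "(\<Sum>k. \<beta> k * inner h (b k) * g k) = inner h (\<Sum>k. (\<beta> k * g k) *\<^sub>R b k)" for h
    by (simp_all add: sums_iff)
  then show ?thesis
    using summable bounded_linear_inner_left by simp
qed

lemma padded_onb_orthogonal: "padded_onb hb \<Longrightarrow> j \<noteq> k \<Longrightarrow> inner (hb j) (hb k) = 0"
  by (simp add: padded_onb_def)

lemma padded_onb_norm: "padded_onb hb \<Longrightarrow> norm (hb k) = 1 \<or> hb k = 0"
  unfolding padded_onb_def by (metis not_le)

lemma padded_onb_norm_le_1: "padded_onb hb \<Longrightarrow> norm (hb k) \<le> 1"
  by (metis padded_onb_norm norm_zero order.refl zero_le_one)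

lemma adjoint_in_L2fun: "is_adjoint lam P PP nud nus \<Longrightarrow> nus h \<in> L2fun P"
  by (simp add: is_adjoint_def tangent_space_def)

lemma integral_square_adjoint:
  "is_adjoint lam P PP nud nus \<Longrightarrow> (\<integral>z. (nus h z)\<^sup>2 \<partial>P) = inner (nud (nus h)) h"
  by (simp add: is_adjoint_def power2_eq_square)

(* The zero padding vectors of hb carry no weight, because nus 0 vanishes in L2(P). *)
lemma padded_onb_weight:
  assumes "padded_onb hb" and "is_adjoint lam P PP nud nus"
  shows "(norm (hb k))\<^sup>2 * (\<integral>z. (nus (hb k) z)\<^sup>2 \<partial>P) = (\<integral>z. (nus (hb k) z)\<^sup>2 \<partial>P)"
  using padded_onb_norm[OF assms(1), of k] integral_square_adjoint[OF assms(2), of 0] by auto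

lemma L2norm_nonneg: "L2norm M s \<ge> 0"
  by (simp add: L2norm_def)

lemma L2norm_adjoint_le:
  assumes adj: "is_adjoint lam P PP nud nus"
    and bound: "\<And>s. s \<in> tangent_space lam P PP \<Longrightarrow> norm (nud s) \<le> K * L2norm P s"
    and "K \<ge> 0"
  shows "L2norm P (nus h) \<le> K * norm h"
proof -
  define x where "x = L2norm P (nus h)"
  have "x\<^sup>2 = (\<integral>z. (nus h z)\<^sup>2 \<partial>P)"
    by (simp add: x_def L2norm_def)
  also have "\<dots> \<le> norm (nud (nus h)) * norm h"
    using adj by (simp add: integral_square_adjoint norm_cauchy_schwarz)
  also have "\<dots> \<le> K * x * norm h"
    using adj bound by (auto simp: x_def is_adjoint_def intro: mult_right_mono)
  finally have "x * x \<le> x * (K * norm h)"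
    by (simp add: power2_eq_square mult_ac)
  then show ?thesis
    using \<open>K \<ge> 0\<close> L2norm_nonneg[of P "nus h"]
    by (cases "x = 0") (auto simp: x_def[symmetric])
qed

lemma bdd_above_L2norm_adjoint:
  assumes "pathwise_diff lam PP \<nu> P nud" and adj: "is_adjoint lam P PP nud nus"
  shows "bdd_above ((\<lambda>h. L2norm P (nus h)) ` {h. norm h \<le> 1})"
proof -
  obtain K where K: "\<And>s. s \<in> tangent_space lam P PP \<Longrightarrow> norm (nud s) \<le> K * L2norm P s"
    using assms(1) unfolding pathwise_diff_def by blast
  have "norm (nud s) \<le> max K 0 * L2norm P s" if "s \<in> tangent_space lam P PP" for s
    using K[OF that] L2norm_nonneg[of P s] by (meson max.cobounded1 mult_right_mono order_trans)
  then have "L2norm P (nus h) \<le> max K 0 * norm h" for h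
    using adj by (intro L2norm_adjoint_le) auto
  then have "L2norm P (nus h) \<le> max K 0" if "norm h \<le> 1" for h
    using that by (meson max.cobounded2 mult_left_le order_trans)
  then show ?thesis
    by (intro bdd_aboveI2) auto
qed

lemma L2norm_le_op_norm_L2:
  assumes "bdd_above ((\<lambda>h. L2norm P (T h)) ` {h. norm h \<le> 1})" and "norm h \<le> 1"
  shows "L2norm P (T h) \<le> op_norm_L2 P T"
  unfolding op_norm_L2_def using assms by (intro cSUP_upper) auto

lemma op_norm_L2_nonneg:
  assumes "bdd_above ((\<lambda>h. L2norm P (T h)) ` {h. norm h \<le> 1})"
  shows "op_norm_L2 P T \<ge> 0"
  using L2norm_le_op_norm_L2[OF assms, of 0] L2norm_nonneg[of P "T 0"] by simp

lemma integral_square_le_op_norm_L2: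
  assumes "bdd_above ((\<lambda>h. L2norm P (T h)) ` {h. norm h \<le> 1})" and "norm h \<le> 1"
  shows "(\<integral>z. (T h z)\<^sup>2 \<partial>P) \<le> (op_norm_L2 P T)\<^sup>2"
proof -
  have "(\<integral>z. (T h z)\<^sup>2 \<partial>P) = (L2norm P (T h))\<^sup>2"
    by (simp add: L2norm_def)
  also have "\<dots> \<le> (op_norm_L2 P T)\<^sup>2"
    by (rule power_mono[OF L2norm_le_op_norm_L2[OF assms] L2norm_nonneg])
  finally show ?thesis .
qed

lemma weighted_integral_square_le_op_norm_L2:
  assumes bdd: "bdd_above ((\<lambda>h. L2norm P (T h)) ` {h. norm h \<le> 1})"
    and norm_le_1: "\<And>k. norm (b k) \<le> 1"
    and \<beta>: "summable (\<lambda>k. (\<beta> k)\<^sup>2)"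
  shows "summable (\<lambda>k. (\<beta> k)\<^sup>2 * (\<integral>z. (T (b k) z)\<^sup>2 \<partial>P))"
    and "sqrt (\<Sum>k. (\<beta> k)\<^sup>2 * (\<integral>z. (T (b k) z)\<^sup>2 \<partial>P)) \<le> op_norm_L2 P T * sqrt (\<Sum>k. (\<beta> k)\<^sup>2)"
proof -
  have term_le: "(\<beta> k)\<^sup>2 * (\<integral>z. (T (b k) z)\<^sup>2 \<partial>P) \<le> (\<beta> k)\<^sup>2 * (op_norm_L2 P T)\<^sup>2" for k
    using integral_square_le_op_norm_L2[OF bdd norm_le_1] by (simp add: mult_left_mono)
  have "norm ((\<beta> k)\<^sup>2 * (\<integral>z. (T (b k) z)\<^sup>2 \<partial>P)) \<le> (\<beta> k)\<^sup>2 * (op_norm_L2 P T)\<^sup>2" for k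
    using term_le[of k] by simp
  then show summable: "summable (\<lambda>k. (\<beta> k)\<^sup>2 * (\<integral>z. (T (b k) z)\<^sup>2 \<partial>P))"
    by (rule summable_comparison_test'[OF summable_mult2[OF \<beta>]])
  have "(\<Sum>k. (\<beta> k)\<^sup>2 * (\<integral>z. (T (b k) z)\<^sup>2 \<partial>P)) \<le> (\<Sum>k. (\<beta> k)\<^sup>2 * (op_norm_L2 P T)\<^sup>2)"
    by (rule suminf_le[OF term_le summable summable_mult2[OF \<beta>]])
  also have "\<dots> = (\<Sum>k. (\<beta> k)\<^sup>2) * (op_norm_L2 P T)\<^sup>2"
    by (rule suminf_mult2[OF \<beta>, symmetric])
  also have "\<dots> = (op_norm_L2 P T)\<^sup>2 * (\<Sum>k. (\<beta> k)\<^sup>2)"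
    by (rule mult.commute)
  finally have "sqrt (\<Sum>k. (\<beta> k)\<^sup>2 * (\<integral>z. (T (b k) z)\<^sup>2 \<partial>P))
      \<le> sqrt ((op_norm_L2 P T)\<^sup>2 * (\<Sum>k. (\<beta> k)\<^sup>2))"
    by (rule real_sqrt_le_mono)
  also have "\<dots> = op_norm_L2 P T * sqrt (\<Sum>k. (\<beta> k)\<^sup>2)"
    using op_norm_L2_nonneg[OF bdd] by (simp add: real_sqrt_mult)
  finally show "sqrt (\<Sum>k. (\<beta> k)\<^sup>2 * (\<integral>z. (T (b k) z)\<^sup>2 \<partial>P)) \<le> op_norm_L2 P T * sqrt (\<Sum>k. (\<beta> k)\<^sup>2)" .
qed

theorem lemma1:
  fixes lam P :: "'z::polish_space measure"
    and PP :: "'z measure set"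
    and \<nu> :: "'z measure \<Rightarrow> 'h::{real_inner,complete_space}"
    and nud :: "('z \<Rightarrow> real) \<Rightarrow> 'h"
    and nus :: "'h \<Rightarrow> 'z \<Rightarrow> real"
    and hb :: "nat \<Rightarrow> 'h"
    and \<beta> :: "nat \<Rightarrow> real"
  assumes model: "dominated_model lam PP"
    and P_in: "P \<in> PP"
    and basis: "padded_onb hb"
    and diff: "pathwise_diff lam PP \<nu> P nud"
    and adj: "is_adjoint lam P PP nud nus"
    and beta_l2: "summable (\<lambda>k. (\<beta> k)\<^sup>2)"
    and beta_01: "\<forall>k. 0 \<le> \<beta> k \<and> \<beta> k \<le> 1"
  shows "\<exists>Z\<beta>. Z\<beta> \<in> sets P \<and> prob_space.prob P Z\<beta> = 1 \<and>
    (\<forall>z\<in>Z\<beta>.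
       (\<forall>h. summable (\<lambda>k. \<beta> k * inner h (hb k) * nus (hb k) z)) \<and>
       bounded_linear (\<lambda>h. \<Sum>k. \<beta> k * inner h (hb k) * nus (hb k) z) \<and>
       summable (\<lambda>k. (\<beta> k * nus (hb k) z) *\<^sub>R hb k) \<and>
       (\<forall>h. (\<Sum>k. \<beta> k * inner h (hb k) * nus (hb k) z)
              = inner h (\<Sum>k. (\<beta> k * nus (hb k) z) *\<^sub>R hb k))) \<and>
    (let \<phi> = (\<lambda>z. indicator Z\<beta> z *\<^sub>R (\<Sum>k. (\<beta> k * nus (hb k) z) *\<^sub>R hb k)) in
       \<phi> \<in> borel_measurable P \<and>
       integrable P (\<lambda>z. (norm (\<phi> z))\<^sup>2) \<and>
       bdd_above ((\<lambda>h. L2norm P (nus h)) ` {h. norm h \<le> 1}) \<and>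
       summable (\<lambda>k. (\<beta> k)\<^sup>2 * (\<integral>z. (nus (hb k) z)\<^sup>2 \<partial>P)) \<and>
       sqrt (\<integral>z. (norm (\<phi> z))\<^sup>2 \<partial>P)
         = sqrt (\<Sum>k. (\<beta> k)\<^sup>2 * (\<integral>z. (nus (hb k) z)\<^sup>2 \<partial>P)) \<and>
       sqrt (\<integral>z. (norm (\<phi> z))\<^sup>2 \<partial>P) \<le> op_norm_L2 P nus * sqrt (\<Sum>k. (\<beta> k)\<^sup>2))"
proof -
  interpret prob_space P
    using model P_in by (simp add: dominated_model_def)
  define f where "f = (\<lambda>k z. \<beta> k * nus (hb k) z)"
  define Z where "Z = square_summable_set P f"
  define \<phi> where "\<phi> = (\<lambda>z. indicator Z z *\<^sub>R (\<Sum>k. (\<beta> k * nus (hb k) z) *\<^sub>R hb k))"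
  have orthogonal: "\<And>j k. j \<noteq> k \<Longrightarrow> inner (hb j) (hb k) = 0"
    and norm_le_1: "\<And>k. norm (hb k) \<le> 1"
    using basis by (auto intro: padded_onb_orthogonal padded_onb_norm_le_1)
  have measurable_f: "\<And>k. f k \<in> borel_measurable P"
    and integrable_f: "\<And>k. integrable P (\<lambda>z. (f k z)\<^sup>2)"
    using adjoint_in_L2fun[OF adj]
    by (auto simp: f_def L2fun_def power_mult_distrib intro!: borel_measurable_times)
  have integral_f: "(\<integral>z. (f k z)\<^sup>2 \<partial>P) = (\<beta> k)\<^sup>2 * (\<integral>z. (nus (hb k) z)\<^sup>2 \<partial>P)" for k
    by (simp add: f_def power_mult_distrib)
  have weight: "(norm (hb k))\<^sup>2 * (\<integral>z. (f k z)\<^sup>2 \<partial>P) = (\<integral>z. (f k z)\<^sup>2 \<partial>P)" for k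
    using padded_onb_weight[OF basis adj, of k] by (simp add: integral_f mult.left_commute)
  have bdd: "bdd_above ((\<lambda>h. L2norm P (nus h)) ` {h. norm h \<le> 1})"
    using diff adj by (rule bdd_above_L2norm_adjoint)
  note weighted = weighted_integral_square_le_op_norm_L2[where b=hb, OF bdd norm_le_1 beta_l2]
  then have summable_f: "summable (\<lambda>k. \<integral>z. (f k z)\<^sup>2 \<partial>P)"
    by (simp add: integral_f)
  have "Z \<in> sets P"
    unfolding Z_def using measurable_f by (rule sets_square_summable_set)
  moreover have "prob Z = 1"
    using AE_square_summable_set[OF measurable_f integrable_f summable_f] \<open>Z \<in> sets P\<close>
    by (simp add: Z_def AE_in_set_eq_1)
  moreover have "summable (\<lambda>k. (\<beta> k * nus (hb k) z)\<^sup>2)" if "z \<in> Z" for z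
    using that by (simp add: Z_def f_def square_summable_set_def)
  moreover have "\<phi> \<in> borel_measurable P"
    using borel_measurable_orthogonal_series[of hb, OF orthogonal norm_le_1 measurable_f]
    by (simp add: \<phi>_def Z_def f_def)
  moreover have "has_bochner_integral P (\<lambda>z. (norm (\<phi> z))\<^sup>2)
      (\<Sum>k. (\<beta> k)\<^sup>2 * (\<integral>z. (nus (hb k) z)\<^sup>2 \<partial>P))"
    using has_bochner_integral_norm_orthogonal_series[of hb, OF orthogonal norm_le_1 measurable_f
        integrable_f summable_f]
    unfolding weight unfolding integral_f by (simp add: \<phi>_def Z_def f_def)
  ultimately show ?thesis
    using weighted_orthogonal_series_represents_functional[OF orthogonal norm_le_1] bdd weighted
    by (intro exI[of _ Z]) (unfold \<phi>_def[symmetric] Let_def, auto simp: has_bochner_integral_iff)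
qed

end
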